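(* Let $p,q\gg n^{-1}$. Let $G$ be an $n$-vertex $q$-cut-dense graph and let $S$ be a $p$-random subset of $V(G)$. Then with high probability $G[S]$ is $p^{20q^{-3}}q^3/400$-cut-dense.
   Context: A graph $G$ is $q$-cut-dense if for every partition $V(G)=A\cup B$ into disjoint sets, the number of edges between $A$ and $B$ is at least $q|A||B|$. A $p$-random subset contains each vertex independently with probability $p$. $G[S]$ is the induced subgraph on $S$. "$p,q\gg n^{-1}$" means $n$ is sufficiently large in terms of $p,q$; "with high probability" means with probability tending to $1$ as $n\to\infty$ (for fixed $p,q$). *)

theory Defs
  imports Complex_Main
begin

definition simple_graph :: "'a set \<Rightarrow> ('a \<Rightarrow> 'a \<Rightarrow> bool) \<Rightarrow> bool" where
  "simple_graph V E \<longleftrightarrow> (\<forall>x\<in>V. \<forall>y\<in>V. E x y = E y x) \<and> (\<forall>x\<in>V. \<not> E x x)"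

definition e_between :: "('a \<Rightarrow> 'a \<Rightarrow> bool) \<Rightarrow> 'a set \<Rightarrow> 'a set \<Rightarrow> nat" where
  "e_between E A B = card {(a, b). a \<in> A \<and> b \<in> B \<and> E a b}"

text \<open>Applied to a subset S of the vertex set,
  this expresses that the induced subgraph G[S] is q-cut-dense.\<close>
definition cut_dense :: "'a set \<Rightarrow> ('a \<Rightarrow> 'a \<Rightarrow> bool) \<Rightarrow> real \<Rightarrow> bool" where
  "cut_dense V E q \<longleftrightarrow>
     (\<forall>A B. A \<union> B = V \<and> A \<inter> B = {} \<longrightarrow>
        real (e_between E A B) \<ge> q * real (card A) * real (card B))"

text \<open>Probability that a p-random subset S of the finite set V (each vertex included
  independently with probability p) satisfies the property P.\<close>
definition random_subset_prob :: "'a set \<Rightarrow> real \<Rightarrow> ('a set \<Rightarrow> bool) \<Rightarrow> real" where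
  "random_subset_prob V p P =
     (\<Sum>S\<in>Pow V. if P S then p ^ card S * (1 - p) ^ (card V - card S) else 0)"

end

theory Submission
  imports Defs
begin

text \<open>
  With high probability the random set \<open>S\<close> is representative for a fixed family of test sets
  \<open>T \<subseteq> V\<close>, i.e. \<open>|S \<inter> T| \<ge> p |T| - \<delta> n\<close>: by a Chernoff bound and a union bound this only
  needs the family to have size polynomial in \<open>n\<close>. Representativeness alone makes \<open>G[S]\<close>
  \<open>p\<^sup>2 q / 400\<close>-cut-dense, which is stronger than the claim. Vertices keep degree \<open>\<ge> p q n / 2\<close>
  into \<open>S\<close>, which settles partitions \<open>(A, B)\<close> of \<open>S\<close> with a small side. If both sides are large
  and the cut is sparse, the majority vote of a suitable labelled sample of \<open>k = O(1/\<delta>)\<close>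
  vertices of \<open>S\<close> (Chebyshev) extends \<open>(A, B)\<close> to a partition \<open>(X, V - X)\<close> of \<open>V\<close> that puts
  almost all vertices of \<open>A\<close> and \<open>B\<close> with a clear majority on their own side. The cut
  \<open>(X, V - X)\<close> has at least \<open>q |X| |V - X|\<close> edges, representativeness for its neighbourhoods and
  degree level sets transfers a \<open>p\<^sup>2\<close> fraction of them into \<open>S\<close>, and all but few of these run
  between \<open>A\<close> and \<open>B\<close>, a contradiction. The vote depends only on the labelled sample, so
  \<open>n\<^bsup>O(1/\<delta>)\<^esup>\<close> test sets suffice.
\<close>

section \<open>Random subsets\<close>

definition subset_weight :: "'a set \<Rightarrow> real \<Rightarrow> 'a set \<Rightarrow> real" where
  "subset_weight V p S = p ^ card S * (1 - p) ^ (card V - card S)"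

lemma random_subset_prob_altdef:
  "random_subset_prob V p P = (\<Sum>S\<in>Pow V. if P S then subset_weight V p S else 0)"
  unfolding random_subset_prob_def subset_weight_def ..

lemma subset_weight_nonneg: "0 \<le> p \<Longrightarrow> p \<le> 1 \<Longrightarrow> 0 \<le> subset_weight V p S"
  by (simp add: subset_weight_def)

lemma sum_subset_weight_power:
  fixes p x :: real
  assumes "finite V" "T \<subseteq> V"
  shows "(\<Sum>S\<in>Pow V. subset_weight V p S * x ^ card (S \<inter> T)) = (1 - p + p * x) ^ card T"
proof -
  define f where "f i = p * (if i \<in> T then x else 1)" for i
  have "(\<Sum>S\<in>Pow V. subset_weight V p S * x ^ card (S \<inter> T))
      = (\<Sum>S\<in>Pow V. (\<Prod>i\<in>S. f i) * (\<Prod>i\<in>V - S. 1 - p))"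
  proof (rule sum.cong[OF refl])
    fix S assume S: "S \<in> Pow V"
    then have "finite S" using assms(1) finite_subset by auto
    then have "(\<Prod>i\<in>S. f i) = p ^ card S * x ^ card (S \<inter> T)"
      by (simp add: f_def prod.distrib prod.If_cases Int_commute)
    moreover have "(\<Prod>i\<in>V - S. 1 - p) = (1 - p) ^ (card V - card S)"
      using S assms(1) by (simp add: card_Diff_subset finite_subset)
    ultimately show "subset_weight V p S * x ^ card (S \<inter> T) = (\<Prod>i\<in>S. f i) * (\<Prod>i\<in>V - S. 1 - p)"
      by (simp add: subset_weight_def)
  qed
  also have "\<dots> = (\<Prod>i\<in>V. f i + (1 - p))"
    by (rule prod_add[OF assms(1), symmetric])
  also have "\<dots> = (\<Prod>i\<in>V. if i \<in> T then 1 - p + p * x else 1)"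
    by (rule prod.cong) (auto simp: f_def)
  also have "\<dots> = (1 - p + p * x) ^ card T"
    using assms by (simp add: prod.If_cases Int_absorb1)
  finally show ?thesis .
qed

lemma sum_subset_weight: "finite V \<Longrightarrow> (\<Sum>S\<in>Pow V. subset_weight V p S) = 1"
  using sum_subset_weight_power[of V "{}" p 1] by simp

lemma random_subset_prob_mono:
  assumes "0 \<le> p" "p \<le> 1" "\<And>S. S \<subseteq> V \<Longrightarrow> P S \<Longrightarrow> Q S"
  shows "random_subset_prob V p P \<le> random_subset_prob V p Q"
  unfolding random_subset_prob_altdef
  by (rule sum_mono) (use assms subset_weight_nonneg in auto)

lemma random_subset_prob_union_bound:
  assumes "finite V" "finite F" "0 \<le> p" "p \<le> 1"
    and "\<And>S. S \<subseteq> V \<Longrightarrow> \<forall>T\<in>F. \<not> Bad T S \<Longrightarrow> P S"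
  shows "1 - (\<Sum>T\<in>F. random_subset_prob V p (Bad T)) \<le> random_subset_prob V p P"
proof -
  have "1 - random_subset_prob V p P = (\<Sum>S\<in>Pow V. if P S then 0 else subset_weight V p S)"
    unfolding random_subset_prob_altdef sum_subset_weight[OF assms(1), symmetric, of p]
    by (subst sum_subtractf[symmetric]) (rule sum.cong, auto)
  also have "\<dots> \<le> (\<Sum>S\<in>Pow V. \<Sum>T\<in>F. if Bad T S then subset_weight V p S else 0)"
  proof (rule sum_mono)
    fix S assume S: "S \<in> Pow V"
    have w: "0 \<le> subset_weight V p S" using assms(3,4) by (rule subset_weight_nonneg)
    show "(if P S then 0 else subset_weight V p S) \<le> (\<Sum>T\<in>F. if Bad T S then subset_weight V p S else 0)"
    proof (cases "P S")
      case False
      then obtain T where "T \<in> F" "Bad T S" using assms(5) S by auto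
      then have "(if Bad T S then subset_weight V p S else 0)
          \<le> (\<Sum>T\<in>F. if Bad T S then subset_weight V p S else 0)"
        using w assms(2) by (intro member_le_sum) auto
      with False \<open>Bad T S\<close> show ?thesis by simp
    qed (use w in \<open>auto intro: sum_nonneg\<close>)
  qed
  also have "\<dots> = (\<Sum>T\<in>F. random_subset_prob V p (Bad T))"
    unfolding random_subset_prob_altdef by (rule sum.swap)
  finally show ?thesis by linarith
qed

lemma random_subset_prob_card_Int_less:
  fixes p x r :: real
  assumes fin: "finite V" and T: "T \<subseteq> V" and p: "0 \<le> p" "p \<le> 1" and x: "0 < x" "x \<le> 1"
  shows "random_subset_prob V p (\<lambda>S. card (S \<inter> T) < r) \<le> x powr (- r) * (1 - p + p * x) ^ card T"
proof -
  have "random_subset_prob V p (\<lambda>S. card (S \<inter> T) < r)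
      \<le> (\<Sum>S\<in>Pow V. subset_weight V p S * (x ^ card (S \<inter> T) * x powr (- r)))"
    unfolding random_subset_prob_altdef
  proof (rule sum_mono)
    fix S
    have w: "0 \<le> subset_weight V p S" using p by (rule subset_weight_nonneg)
    have "1 \<le> x ^ card (S \<inter> T) * x powr (- r)" if "card (S \<inter> T) < r"
    proof -
      have "x ^ card (S \<inter> T) * x powr (- r) = x powr (card (S \<inter> T) - r)"
        using x by (simp add: powr_realpow[symmetric] powr_add[symmetric])
      also have "1 \<le> \<dots>"
        using that x by (simp add: powr_def mult_nonpos_nonpos)
      finally show ?thesis .
    qed
    then show "(if card (S \<inter> T) < r then subset_weight V p S else 0)
        \<le> subset_weight V p S * (x ^ card (S \<inter> T) * x powr (- r))"
      using w x by (auto intro: mult_le_cancel_left1[THEN iffD2])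
  qed
  also have "\<dots> = x powr (- r) * (1 - p + p * x) ^ card T"
    by (simp add: sum_distrib_left sum_subset_weight_power[OF fin T, symmetric] mult_ac)
  finally show ?thesis .
qed

text \<open>Chernoff's bound: the exponential moment with base \<open>x = 1 - \<delta>/(2p)\<close>.\<close>

lemma random_subset_prob_lower_tail:
  fixes p \<delta> :: real
  assumes fin: "finite V" and T: "T \<subseteq> V" and p: "p \<le> 1" and \<delta>: "0 < \<delta>" "\<delta> \<le> p"
  shows "random_subset_prob V p (\<lambda>S. card (S \<inter> T) < p * card T - \<delta> * card V)
     \<le> exp (- (\<delta> ^ 2 / 4) * card V)"
proof -
  define h where "h = \<delta> / (2 * p)"
  define x where "x = 1 - h"
  define n where "n = real (card V)"
  define m where "m = real (card T)"
  define r where "r = p * m - \<delta> * n"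
  have p0: "0 < p" using \<delta> by linarith
  have h: "\<delta> / 2 \<le> h" "h \<le> 1/2" using p0 p \<delta> by (auto simp: h_def field_simps)
  have x: "1/2 \<le> x" "x < 1" using h \<delta> by (auto simp: x_def)
  have mn: "m \<le> n" unfolding m_def n_def using card_mono[OF fin T] by simp
  show ?thesis
  proof (cases "r \<le> 0")
    case True
    then have "random_subset_prob V p (\<lambda>S. card (S \<inter> T) < p * card T - \<delta> * card V) = 0"
      unfolding random_subset_prob_altdef by (intro sum.neutral) (auto simp: r_def m_def n_def)
    then show ?thesis by simp
  next
    case False
    have "random_subset_prob V p (\<lambda>S. card (S \<inter> T) < p * card T - \<delta> * card V)
       \<le> x powr (- r) * (1 - p + p * x) ^ card T"
      using random_subset_prob_card_Int_less[OF fin T _ p, of x r] p0 x by (simp add: r_def m_def n_def)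
    also have "\<dots> \<le> exp (r * h / x) * exp (- p * h * m)"
    proof (rule mult_mono)
      have "ln (1 / x) \<le> 1 / x - 1" using x by (intro ln_le_minus_one) auto
      then have "- ln x \<le> h / x" using x by (simp add: ln_div x_def field_simps)
      then have "- r * ln x \<le> r * (h / x)"
        using False by (metis minus_mult_commute mult_left_mono not_le less_imp_le mult_minus_right)
      then show "x powr (- r) \<le> exp (r * h / x)" using x by (simp add: powr_def)
      have "p * h \<le> 1" using p h \<delta> by (intro mult_le_one) auto
      then have "0 \<le> 1 - p + p * x" "1 - p + p * x \<le> exp (- p * h)"
        using exp_ge_add_one_self[of "- p * h"] by (auto simp: x_def algebra_simps)
      then have "(1 - p + p * x) ^ card T \<le> exp (- p * h) ^ card T"
        by (intro power_mono)
      also have "\<dots> = exp (- p * h * m)" by (simp add: m_def exp_of_nat_mult[symmetric] mult.commute)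
      finally show "(1 - p + p * x) ^ card T \<le> exp (- p * h * m)" .
    qed (use p p0 x in auto)
    also have "\<dots> \<le> exp (- (\<delta> ^ 2 / 4) * n)"
    proof -
      have "r * h - p * h * m * x = h * (p * h * m - \<delta> * n)"
        by (simp add: r_def x_def algebra_simps)
      also have "\<dots> \<le> h * (p * h * n - \<delta> * n)"
        using h mn p0 \<delta> by (intro mult_left_mono) auto
      also have "\<dots> = - h * \<delta> / 2 * n"
        using p0 by (simp add: h_def field_simps power2_eq_square)
      finally have "(r * h - p * h * m * x) / x \<le> - h * \<delta> / 2 * n / x"
        using x by (intro divide_right_mono) auto
      then have "r * h / x - p * h * m \<le> - h * \<delta> / 2 * n / x"
        using x by (simp add: diff_divide_distrib)
      also have "\<dots> \<le> - h * \<delta> / 2 * n"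
        using x h \<delta> by (simp add: field_simps n_def mult_left_le_one_le mult_nonneg_nonneg)
      also have "\<dots> \<le> - (\<delta> ^ 2 / 4) * n"
      proof -
        have "\<delta> * \<delta> * n \<le> (2 * h) * \<delta> * n"
          using h \<delta> by (intro mult_right_mono) (auto simp: n_def)
        then show ?thesis by (simp add: power2_eq_square)
      qed
      finally show ?thesis by (simp add: exp_add[symmetric])
    qed
    finally show ?thesis by (simp add: n_def)
  qed
qed

definition representative :: "'a set \<Rightarrow> real \<Rightarrow> real \<Rightarrow> 'a set set \<Rightarrow> 'a set \<Rightarrow> bool" where
  "representative V p \<delta> F S \<longleftrightarrow> (\<forall>T\<in>F. p * card T - \<delta> * card V \<le> card (S \<inter> T))"

lemma random_subset_prob_representative:
  assumes "finite V" "finite F" "\<forall>T\<in>F. T \<subseteq> V" "0 < \<delta>" "\<delta> \<le> p" "p \<le> 1"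
  shows "1 - card F * exp (- (\<delta> ^ 2 / 4) * card V) \<le> random_subset_prob V p (representative V p \<delta> F)"
proof -
  have "(\<Sum>T\<in>F. random_subset_prob V p (\<lambda>S. card (S \<inter> T) < p * card T - \<delta> * card V))
      \<le> (\<Sum>T\<in>F. exp (- (\<delta> ^ 2 / 4) * card V))"
    using assms by (intro sum_mono random_subset_prob_lower_tail) auto
  moreover have "1 - (\<Sum>T\<in>F. random_subset_prob V p (\<lambda>S. card (S \<inter> T) < p * card T - \<delta> * card V))
      \<le> random_subset_prob V p (representative V p \<delta> F)"
    using assms by (intro random_subset_prob_union_bound) (auto simp: representative_def not_less)
  ultimately show ?thesis by simp
qed

section \<open>Samples with replacement\<close>

abbreviation tuples :: "nat \<Rightarrow> 'a set \<Rightarrow> 'a list set" where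
  "tuples k S \<equiv> {xs. set xs \<subseteq> S \<and> length xs = k}"

lemma sum_tuples_Suc:
  assumes "finite S"
  shows "(\<Sum>xs\<in>tuples (Suc k) S. g xs) = (\<Sum>xs\<in>tuples k S. \<Sum>v\<in>S. g (v # xs))"
proof -
  have inj: "inj_on (\<lambda>(xs, v). v # xs) (tuples k S \<times> S)" by (auto simp: inj_on_def)
  have "(\<Sum>xs\<in>tuples (Suc k) S. g xs) = (\<Sum>xs\<in>(\<lambda>(xs, v). v # xs) ` (tuples k S \<times> S). g xs)"
    by (simp add: lists_length_Suc_eq)
  also have "\<dots> = (\<Sum>(xs, v)\<in>tuples k S \<times> S. g (v # xs))"
    by (subst sum.reindex[OF inj]) (simp add: case_prod_beta comp_def)
  finally show ?thesis by (simp add: sum.cartesian_product)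
qed

lemma sum_tuples_sum_list_square:
  fixes f :: "'a \<Rightarrow> real"
  assumes fin: "finite S" and mean: "(\<Sum>v\<in>S. f v) = 0"
  shows "(\<Sum>xs\<in>tuples k S. (\<Sum>v\<leftarrow>xs. f v)\<^sup>2) = real k * real (card S) ^ (k - 1) * (\<Sum>v\<in>S. (f v)\<^sup>2)"
proof (induction k)
  case (Suc k)
  have "(\<Sum>xs\<in>tuples (Suc k) S. (\<Sum>v\<leftarrow>xs. f v)\<^sup>2)
      = (\<Sum>xs\<in>tuples k S. \<Sum>v\<in>S. (f v)\<^sup>2 + 2 * (\<Sum>u\<leftarrow>xs. f u) * f v + (\<Sum>u\<leftarrow>xs. f u)\<^sup>2)"
    by (simp add: sum_tuples_Suc[OF fin] power2_eq_square algebra_simps)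
  also have "\<dots> = (\<Sum>xs\<in>tuples k S. (\<Sum>v\<in>S. (f v)\<^sup>2) + card S * (\<Sum>u\<leftarrow>xs. f u)\<^sup>2)"
    using mean by (simp add: sum.distrib sum_distrib_left[symmetric])
  also have "\<dots> = card S ^ k * (\<Sum>v\<in>S. (f v)\<^sup>2) + card S * (\<Sum>xs\<in>tuples k S. (\<Sum>u\<leftarrow>xs. f u)\<^sup>2)"
    by (simp add: sum.distrib sum_distrib_left card_lists_length_eq[OF fin])
  also have "\<dots> = Suc k * card S ^ k * (\<Sum>v\<in>S. (f v)\<^sup>2)"
    using Suc.IH by (cases k) (simp_all add: algebra_simps)
  finally show ?case by (simp add: algebra_simps)
qed simp

text \<open>Chebyshev's inequality for the sum of \<open>k\<close> independent uniform samples from \<open>S\<close>, with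
  probabilities written as numbers of tuples.\<close>

lemma card_tuples_sum_list_nonpos:
  fixes Y :: "'a \<Rightarrow> real"
  assumes fin: "finite S" and pos: "0 < (\<Sum>v\<in>S. Y v)"
  shows "real (card {xs\<in>tuples k S. (\<Sum>v\<leftarrow>xs. Y v) \<le> 0}) * k * (\<Sum>v\<in>S. Y v)\<^sup>2
    \<le> real (card S) ^ (k + 1) * (\<Sum>v\<in>S. (Y v)\<^sup>2)"
proof (cases "k = 0")
  case False
  define s where "s = real (card S)"
  define \<mu> where "\<mu> = (\<Sum>v\<in>S. Y v) / s"
  define f where "f v = Y v - \<mu>" for v
  have s: "0 < s" using pos fin by (auto simp: s_def card_gt_0_iff)
  have sum_Y: "(\<Sum>v\<in>S. Y v) = s * \<mu>" using s by (simp add: \<mu>_def)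
  then have \<mu>: "0 < \<mu>" using pos s by (simp add: zero_less_mult_iff)
  have mean: "(\<Sum>v\<in>S. f v) = 0" using sum_Y by (simp add: f_def sum_subtractf s_def)
  have "card {xs\<in>tuples k S. (\<Sum>v\<leftarrow>xs. Y v) \<le> 0} * (k * \<mu>)\<^sup>2
      = (\<Sum>xs\<in>{xs\<in>tuples k S. (\<Sum>v\<leftarrow>xs. Y v) \<le> 0}. (k * \<mu>)\<^sup>2)" by simp
  also have "\<dots> \<le> (\<Sum>xs\<in>{xs\<in>tuples k S. (\<Sum>v\<leftarrow>xs. Y v) \<le> 0}. (\<Sum>v\<leftarrow>xs. f v)\<^sup>2)"
  proof (rule sum_mono)
    fix xs assume xs: "xs \<in> {xs\<in>tuples k S. (\<Sum>v\<leftarrow>xs. Y v) \<le> 0}"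
    have "(\<Sum>v\<leftarrow>xs. f v) = (\<Sum>v\<leftarrow>xs. Y v) - k * \<mu>"
      using xs by (simp add: f_def sum_list_subtractf sum_list_triv)
    then have "k * \<mu> \<le> - (\<Sum>v\<leftarrow>xs. f v)" using xs by simp
    then show "(k * \<mu>)\<^sup>2 \<le> (\<Sum>v\<leftarrow>xs. f v)\<^sup>2"
      using power_mono[of "k * \<mu>" "- (\<Sum>v\<leftarrow>xs. f v)" 2] \<mu> by simp
  qed
  also have "\<dots> \<le> (\<Sum>xs\<in>tuples k S. (\<Sum>v\<leftarrow>xs. f v)\<^sup>2)"
    by (rule sum_mono2[OF finite_lists_length_eq[OF fin]]) auto
  also have "\<dots> = k * s ^ (k - 1) * (\<Sum>v\<in>S. (f v)\<^sup>2)"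
    unfolding s_def by (rule sum_tuples_sum_list_square[OF fin mean])
  also have "(\<Sum>v\<in>S. (f v)\<^sup>2) = (\<Sum>v\<in>S. (Y v)\<^sup>2) - 2 * \<mu> * (\<Sum>v\<in>S. Y v) + s * \<mu>\<^sup>2"
    by (simp add: f_def power2_diff sum.distrib sum_subtractf sum_distrib_left sum_distrib_right s_def mult_ac)
  also have "\<dots> = (\<Sum>v\<in>S. (Y v)\<^sup>2) - s * \<mu>\<^sup>2"
    using sum_Y by (simp add: power2_eq_square)
  also have "k * s ^ (k - 1) * \<dots> \<le> k * s ^ (k - 1) * (\<Sum>v\<in>S. (Y v)\<^sup>2)"
    using s by (intro mult_left_mono) auto
  finally have "card {xs\<in>tuples k S. (\<Sum>v\<leftarrow>xs. Y v) \<le> 0} * (k * \<mu>)\<^sup>2 * (s\<^sup>2 / k)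
      \<le> k * s ^ (k - 1) * (\<Sum>v\<in>S. (Y v)\<^sup>2) * (s\<^sup>2 / k)"
    using s \<mu> by (intro mult_right_mono) auto
  moreover have "card {xs\<in>tuples k S. (\<Sum>v\<leftarrow>xs. Y v) \<le> 0} * (k * \<mu>)\<^sup>2 * (s\<^sup>2 / k)
      = card {xs\<in>tuples k S. (\<Sum>v\<leftarrow>xs. Y v) \<le> 0} * k * (\<Sum>v\<in>S. Y v)\<^sup>2"
    using False sum_Y by (simp add: power2_eq_square field_simps)
  moreover have "k * s ^ (k - 1) * (\<Sum>v\<in>S. (Y v)\<^sup>2) * (s\<^sup>2 / k) = s ^ (k + 1) * (\<Sum>v\<in>S. (Y v)\<^sup>2)"
    using False by (simp add: power_add[symmetric])
  ultimately show ?thesis by (simp add: s_def)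
qed (simp add: sum_nonneg)

section \<open>Neighbourhoods and edge counts\<close>

definition nbhd :: "('a \<Rightarrow> 'a \<Rightarrow> bool) \<Rightarrow> 'a set \<Rightarrow> 'a \<Rightarrow> 'a set" where
  "nbhd E T x = {y\<in>T. E x y}"

lemma finite_nbhd [simp]: "finite T \<Longrightarrow> finite (nbhd E T x)"
  by (simp add: nbhd_def)

lemma card_nbhd_le: "finite T \<Longrightarrow> card (nbhd E T x) \<le> card T"
  by (rule card_mono) (auto simp: nbhd_def)

lemma card_nbhd_Un:
  assumes "finite A" "finite B" "A \<inter> B = {}"
  shows "card (nbhd E (A \<union> B) x) = card (nbhd E A x) + card (nbhd E B x)"
proof -
  have "nbhd E (A \<union> B) x = nbhd E A x \<union> nbhd E B x" by (auto simp: nbhd_def)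
  with assms show ?thesis by (simp add: card_Un_disjoint nbhd_def disjoint_iff)
qed

lemma e_between_eq_sum_card_nbhd:
  assumes "finite A" "finite B"
  shows "e_between E A B = (\<Sum>x\<in>A. card (nbhd E B x))"
proof -
  have "{(a, b). a \<in> A \<and> b \<in> B \<and> E a b} = Sigma A (nbhd E B)"
    by (auto simp: nbhd_def)
  then show ?thesis using assms by (simp add: e_between_def)
qed

lemma e_between_commute:
  assumes "simple_graph V E" "A \<subseteq> V" "B \<subseteq> V"
  shows "e_between E A B = e_between E B A"
proof -
  have "{(a, b). a \<in> B \<and> b \<in> A \<and> E a b} = (\<lambda>(i, j). (j, i)) ` {(a, b). a \<in> A \<and> b \<in> B \<and> E a b}"
    using assms unfolding simple_graph_def by (auto simp: image_iff subset_iff)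
  then show ?thesis by (simp add: e_between_def card_image[OF swap_inj_on])
qed

lemma e_between_Un_left:
  assumes "finite A" "finite A'" "finite B" "A \<inter> A' = {}"
  shows "e_between E (A \<union> A') B = e_between E A B + e_between E A' B"
  using assms by (simp add: e_between_eq_sum_card_nbhd sum.union_disjoint)

lemma e_between_Un_right:
  assumes "finite A" "finite B" "finite B'" "B \<inter> B' = {}"
  shows "e_between E A (B \<union> B') = e_between E A B + e_between E A B'"
  using assms by (simp add: e_between_eq_sum_card_nbhd card_nbhd_Un sum.distrib)

lemma e_between_mono:
  assumes "finite A" "finite B" "A' \<subseteq> A" "B' \<subseteq> B"
  shows "e_between E A' B' \<le> e_between E A B"
proof -
  have "finite {(a, b). a \<in> A \<and> b \<in> B \<and> E a b}"
    using assms(1,2) by (rule finite_subset[rotated, OF finite_cartesian_product]) auto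
  then show ?thesis
    unfolding e_between_def by (rule card_mono) (use assms(3,4) in auto)
qed

lemma card_nbhd_ge_if_cut_dense:
  assumes "cut_dense V E q" "finite V" "w \<in> V"
  shows "q * (card V - 1) \<le> card (nbhd E V w)"
proof -
  have "{w} \<union> (V - {w}) = V \<and> {w} \<inter> (V - {w}) = {}" using assms(3) by auto
  then have "q * card {w} * card (V - {w}) \<le> e_between E {w} (V - {w})"
    using assms(1) unfolding cut_dense_def by blast
  also have "\<dots> \<le> card (nbhd E V w)"
    using assms(2) by (simp add: e_between_eq_sum_card_nbhd nbhd_def) (intro card_mono; auto)
  finally show ?thesis using assms(2,3) by (simp add: of_nat_diff card_gt_0_iff)
qed

lemma cut_dense_mono:
  assumes "cut_dense S E c'" "c \<le> c'"
  shows "cut_dense S E c"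
  unfolding cut_dense_def
proof (intro allI impI)
  fix A B assume "A \<union> B = S \<and> A \<inter> B = {}"
  then have "c' * card A * card B \<le> e_between E A B"
    using assms(1) unfolding cut_dense_def by blast
  moreover have "c * card A * card B \<le> c' * card A * card B"
    using assms(2) by (intro mult_right_mono) auto
  ultimately show "c * card A * card B \<le> e_between E A B" by linarith
qed

lemma sum_eq_sum_card_level_sets:
  assumes "finite A" "\<forall>x\<in>A. f x \<le> N"
  shows "(\<Sum>x\<in>A. f x) = (\<Sum>j\<in>{1..N}. card {x\<in>A. j \<le> f x})"
proof -
  have "(\<Sum>x\<in>A. f x) = (\<Sum>x\<in>A. \<Sum>j\<in>{1..N}. if j \<le> f x then 1 else 0)"
  proof (rule sum.cong[OF refl])
    fix x assume "x \<in> A"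
    then have "{1..N} \<inter> {j. j \<le> f x} = {1..f x}" using assms(2) by auto
    then show "f x = (\<Sum>j\<in>{1..N}. if j \<le> f x then 1 else 0)"
      by (simp add: sum.If_cases)
  qed
  also have "\<dots> = (\<Sum>j\<in>{1..N}. card {x\<in>A. j \<le> f x})"
    using assms(1) by (subst sum.swap) (simp add: sum.If_cases Int_def)
  finally show ?thesis .
qed

section \<open>Cuts of a vertex subset\<close>

definition heavy :: "('a \<Rightarrow> 'a \<Rightarrow> bool) \<Rightarrow> 'a set \<Rightarrow> 'a set \<Rightarrow> 'a set" where
  "heavy E A B = {w\<in>A. 2 * card (nbhd E B w) < card (nbhd E A w)}"

definition misplaced :: "('a \<Rightarrow> 'a \<Rightarrow> bool) \<Rightarrow> 'a set \<Rightarrow> 'a set \<Rightarrow> 'a set \<Rightarrow> real" where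
  "misplaced E A B X = (\<Sum>w\<in>heavy E A B - X. real (card (nbhd E A w)))
     + (\<Sum>w\<in>heavy E B A \<inter> X. real (card (nbhd E B w)))"

lemma sum_card_nbhd_Diff_le:
  assumes "finite A"
  shows "(\<Sum>w\<in>A - Y. card (nbhd E A w))
    \<le> 2 * (\<Sum>w\<in>A. card (nbhd E B w)) + (\<Sum>w\<in>heavy E A B - Y. card (nbhd E A w))"
proof -
  have "(\<Sum>w\<in>A - Y. card (nbhd E A w)) \<le> (\<Sum>w\<in>(A - heavy E A B) \<union> (heavy E A B - Y). card (nbhd E A w))"
    using assms by (intro sum_mono2) (auto simp: heavy_def)
  also have "\<dots> = (\<Sum>w\<in>A - heavy E A B. card (nbhd E A w)) + (\<Sum>w\<in>heavy E A B - Y. card (nbhd E A w))"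
    using assms by (intro sum.union_disjoint) (auto simp: heavy_def)
  also have "(\<Sum>w\<in>A - heavy E A B. card (nbhd E A w)) \<le> (\<Sum>w\<in>A - heavy E A B. 2 * card (nbhd E B w))"
    by (intro sum_mono) (auto simp: heavy_def)
  also have "\<dots> \<le> 2 * (\<Sum>w\<in>A. card (nbhd E B w))"
    using assms by (auto simp: sum_distrib_left[symmetric] intro: sum_mono2)
  finally show ?thesis by simp
qed

lemma card_Diff_mult_le:
  fixes D :: real
  assumes fin: "finite A" and D: "0 \<le> D" and deg: "\<forall>w\<in>A. D \<le> card (nbhd E A w) + card (nbhd E B w)"
  shows "card (A - Y) * D
    \<le> 3 * (\<Sum>w\<in>A. real (card (nbhd E B w))) + 3 / 2 * (\<Sum>w\<in>heavy E A B - Y. real (card (nbhd E A w)))"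
proof -
  have "card (A - Y) \<le> card (A - heavy E A B) + card (heavy E A B - Y)"
    using fin by (intro order_trans[OF card_mono card_Un_le]) (auto simp: heavy_def)
  then have "card (A - Y) * D \<le> card (A - heavy E A B) * D + card (heavy E A B - Y) * D"
    using D by (simp add: mult_right_mono flip: distrib_right)
  also have "card (A - heavy E A B) * D \<le> (\<Sum>w\<in>A - heavy E A B. 3 * real (card (nbhd E B w)))"
    using deg by (intro sum_bounded_below) (force simp: heavy_def)
  also have "\<dots> \<le> 3 * (\<Sum>w\<in>A. card (nbhd E B w))"
    using fin by (auto simp: sum_distrib_left[symmetric] intro: sum_mono2)
  also have "card (heavy E A B - Y) * D \<le> (\<Sum>w\<in>heavy E A B - Y. 3 / 2 * real (card (nbhd E A w)))"
    using deg by (intro sum_bounded_below) (force simp: heavy_def)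
  finally show ?thesis by (simp add: sum_distrib_left)
qed

lemma card_Int_ge_half:
  fixes p q \<delta> n :: real
  assumes fin: "finite A" and p: "0 < p" "p \<le> 1" and q: "0 < q" "q \<le> 1"
    and \<delta>: "\<delta> = p ^ 4 * q ^ 3 / 2048" and n: "0 < n"
    and deg: "\<forall>w\<in>A. p * q * n / 2 \<le> card (nbhd E A w) + card (nbhd E B w)"
    and sparse: "(\<Sum>w\<in>A. real (card (nbhd E B w))) \<le> p\<^sup>2 * q / 400 * card A * n"
    and misplaced: "(\<Sum>w\<in>heavy E A B - Y. real (card (nbhd E A w))) \<le> 2 * \<delta> * n\<^sup>2"
    and large: "p * q * n / 8 < card A"
  shows "card A / 2 \<le> card (A \<inter> Y)"
proof -
  define a where "a = real (card A)"
  define \<gamma> where "\<gamma> = p * q * n"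
  have \<gamma>: "0 < \<gamma>" "\<gamma> < 8 * a" using p q n large by (simp_all add: \<gamma>_def a_def)
  have "card (A - Y) * (\<gamma> / 2)
      \<le> 3 * (\<Sum>w\<in>A. real (card (nbhd E B w))) + 3 / 2 * (\<Sum>w\<in>heavy E A B - Y. real (card (nbhd E A w)))"
    using card_Diff_mult_le[OF fin _ deg, of Y] \<gamma> by (simp add: \<gamma>_def)
  also have "\<dots> \<le> 3 * (p\<^sup>2 * q / 400 * a * n) + 3 / 2 * (2 * \<delta> * n\<^sup>2)"
    using sparse misplaced by (simp add: a_def)
  also have "3 * (p\<^sup>2 * q / 400 * a * n) \<le> \<gamma> * a / 100"
  proof -
    have "3 * p * (\<gamma> * a) \<le> 4 * (\<gamma> * a)" using p \<gamma> by (intro mult_right_mono) auto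
    then show ?thesis by (simp add: \<gamma>_def power2_eq_square mult_ac)
  qed
  also have "3 / 2 * (2 * \<delta> * n\<^sup>2) = 3 * \<gamma> * (p\<^sup>2 * q * \<gamma>) / 2048"
    by (simp add: \<delta> \<gamma>_def power2_eq_square eval_nat_numeral)
  also have "\<dots> \<le> 3 * \<gamma> * (8 * a) / 2048"
  proof -
    have "p\<^sup>2 * q \<le> 1" using p q by (simp add: mult_le_one power_le_one)
    then have "p\<^sup>2 * q * \<gamma> \<le> \<gamma>" using \<gamma> q by (intro mult_left_le_one_le) auto
    then have "p\<^sup>2 * q * \<gamma> \<le> 8 * a" using \<gamma> by linarith
    then show ?thesis using \<gamma> by (intro divide_right_mono mult_left_mono) auto
  qed
  finally have "card (A - Y) * (\<gamma> / 2) \<le> (a / 2) * (\<gamma> / 2)"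
    using \<gamma> by (simp add: a_def)
  then have "card (A - Y) \<le> a / 2" using \<gamma> by simp
  then show ?thesis using card_Int_Diff[OF fin, of Y] by (simp add: a_def)
qed

lemma e_between_ge_small_part:
  fixes c D :: real
  assumes fin: "finite A" "finite B" and disj: "A \<inter> B = {}"
    and deg: "\<forall>w\<in>A. D \<le> card (nbhd E (A \<union> B) w)" and small: "c * card B \<le> D - card A"
  shows "c * card A * card B \<le> e_between E A B"
proof -
  have "c * card B \<le> card (nbhd E B w)" if "w \<in> A" for w
  proof -
    have "card (nbhd E A w) \<le> card A" using fin(1) by (rule card_nbhd_le)
    then show ?thesis using deg that small card_nbhd_Un[OF fin disj, of E w] by auto
  qed
  then have "card A * (c * card B) \<le> (\<Sum>w\<in>A. real (card (nbhd E B w)))"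
    by (intro sum_bounded_below) auto
  then show ?thesis using fin by (simp add: e_between_eq_sum_card_nbhd mult_ac)
qed

lemma e_between_cut_le:
  assumes G: "simple_graph V E" and AV: "A \<subseteq> V" and BV: "B \<subseteq> V" and fin: "finite V"
    and disj: "A \<inter> B = {}"
  shows "e_between E ((A \<union> B) \<inter> X) ((A \<union> B) - X) \<le> 6 * e_between E A B + misplaced E A B X"
proof -
  have fA: "finite A" and fB: "finite B" using AV BV fin finite_subset by auto
  have BA: "e_between E B A = e_between E A B" using e_between_commute[OF G BV AV] .
  have "e_between E ((A \<union> B) \<inter> X) ((A \<union> B) - X)
      = e_between E (A \<inter> X) (A - X) + e_between E (A \<inter> X) (B - X)
      + e_between E (B \<inter> X) (A - X) + e_between E (B \<inter> X) (B - X)"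
    using fA fB disj
    by (simp add: Int_Un_distrib2 Un_Diff e_between_Un_left e_between_Un_right disjoint_iff)
  also have "e_between E (A \<inter> X) (A - X) \<le> e_between E (A - X) A"
  proof -
    have "e_between E (A \<inter> X) (A - X) = e_between E (A - X) (A \<inter> X)"
      using AV by (intro e_between_commute[OF G]) auto
    also have "\<dots> \<le> e_between E (A - X) A"
      using fA by (intro e_between_mono) auto
    finally show ?thesis .
  qed
  also have "e_between E (A - X) A \<le> 2 * e_between E A B + (\<Sum>w\<in>heavy E A B - X. card (nbhd E A w))"
    using sum_card_nbhd_Diff_le[OF fA, where Y = X and E = E and B = B] fA fB
    by (simp add: e_between_eq_sum_card_nbhd)
  also have "e_between E (A \<inter> X) (B - X) \<le> e_between E A B"
    using fA fB by (intro e_between_mono) auto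
  also have "e_between E (B \<inter> X) (A - X) \<le> e_between E A B"
    using e_between_mono[OF fB fA, of "B \<inter> X" "A - X" E] BA by simp
  also have "e_between E (B \<inter> X) (B - X) \<le> e_between E (B - - X) B"
    using fB by (intro e_between_mono) auto
  also have "\<dots> \<le> 2 * e_between E A B + (\<Sum>w\<in>heavy E B A \<inter> X. card (nbhd E B w))"
    using sum_card_nbhd_Diff_le[OF fB, where Y = "- X" and E = E and B = A] fA fB BA
    by (simp add: e_between_eq_sum_card_nbhd Diff_Compl)
  finally have "e_between E ((A \<union> B) \<inter> X) ((A \<union> B) - X) \<le> 6 * e_between E A B
    + (\<Sum>w\<in>heavy E A B - X. card (nbhd E A w)) + (\<Sum>w\<in>heavy E B A \<inter> X. card (nbhd E B w))"
    by simp
  then have "real (e_between E ((A \<union> B) \<inter> X) ((A \<union> B) - X)) \<le> real (6 * e_between E A B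
    + (\<Sum>w\<in>heavy E A B - X. card (nbhd E A w)) + (\<Sum>w\<in>heavy E B A \<inter> X. card (nbhd E B w)))"
    by (simp only: of_nat_le_iff)
  then show ?thesis by (simp add: misplaced_def)
qed

definition cut_test_sets :: "'a set \<Rightarrow> ('a \<Rightarrow> 'a \<Rightarrow> bool) \<Rightarrow> 'a set \<Rightarrow> 'a set set" where
  "cut_test_sets V E X = nbhd E (V - X) ` V
     \<union> (\<lambda>j. {x\<in>X. j \<le> card (nbhd E (V - X) x)}) ` {1..card V}"

text \<open>The level sets of the degree into \<open>V - X\<close> turn the sum of these degrees over \<open>S \<inter> X\<close> into
  a sum of sizes of sampled sets; together with the sampled neighbourhoods, \<open>S\<close> thus sees a
  \<open>p\<^sup>2\<close> fraction of the cut \<open>(X, V - X)\<close>.\<close>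

lemma e_between_ge_if_representative:
  fixes p \<delta> :: real
  assumes fin: "finite V" and XV: "X \<subseteq> V" and SV: "S \<subseteq> V"
    and p: "0 \<le> p" "p \<le> 1" and \<delta>: "0 \<le> \<delta>"
    and rep: "representative V p \<delta> (cut_test_sets V E X) S"
  shows "p\<^sup>2 * e_between E X (V - X) - 2 * \<delta> * (real (card V))\<^sup>2 \<le> e_between E (S \<inter> X) (S - X)"
proof -
  define n where "n = card V"
  define f where "f x = card (nbhd E (V - X) x)" for x
  define L where "L j = {x\<in>X. j \<le> f x}" for j
  have fX: "finite X" and fSX: "finite (S \<inter> X)" using fin XV finite_subset by auto
  have f_le: "\<forall>x\<in>A. f x \<le> n" for A
    using fin by (auto simp: f_def n_def intro: order_trans[OF card_nbhd_le] card_mono)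
  have rep_nbhd: "p * f x - \<delta> * n \<le> card (S \<inter> nbhd E (V - X) x)" if "x \<in> V" for x
    using rep that by (auto simp: representative_def cut_test_sets_def f_def n_def)
  have rep_level: "p * card (L j) - \<delta> * n \<le> card (S \<inter> L j)" if "j \<in> {1..n}" for j
    using rep that by (auto simp: representative_def cut_test_sets_def f_def n_def L_def)
  have "p * e_between E X (V - X) - \<delta> * n * n = (\<Sum>j\<in>{1..n}. p * card (L j) - \<delta> * n)"
    using fX fin f_le
    by (simp add: e_between_eq_sum_card_nbhd sum_eq_sum_card_level_sets[of X f n]
        sum_subtractf sum_distrib_left L_def f_def flip: f_def)
  also have "\<dots> \<le> (\<Sum>j\<in>{1..n}. real (card (S \<inter> L j)))"
    by (intro sum_mono rep_level)
  also have "\<dots> = (\<Sum>x\<in>S \<inter> X. real (f x))"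
    using sum_eq_sum_card_level_sets[OF fSX f_le]
    by (simp add: L_def Int_def conj_ac flip: of_nat_sum)
  finally have level: "p * e_between E X (V - X) - \<delta> * n * n \<le> (\<Sum>x\<in>S \<inter> X. real (f x))" .
  have "p * (\<Sum>x\<in>S \<inter> X. real (f x)) - \<delta> * n * card (S \<inter> X) = (\<Sum>x\<in>S \<inter> X. p * f x - \<delta> * n)"
    by (simp add: sum_subtractf sum_distrib_left)
  also have "\<dots> \<le> (\<Sum>x\<in>S \<inter> X. real (card (S \<inter> nbhd E (V - X) x)))"
    using XV by (intro sum_mono rep_nbhd) auto
  also have "\<dots> = (\<Sum>x\<in>S \<inter> X. real (card (nbhd E (S - X) x)))"
    using SV by (intro sum.cong refl arg_cong[where f="\<lambda>A. real (card A)"]) (auto simp: nbhd_def)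
  also have "\<dots> = e_between E (S \<inter> X) (S - X)"
    using fin SV fSX by (simp add: e_between_eq_sum_card_nbhd finite_subset)
  finally have nbhd: "p * (\<Sum>x\<in>S \<inter> X. real (f x)) - \<delta> * n * card (S \<inter> X) \<le> e_between E (S \<inter> X) (S - X)" .
  have "card (S \<inter> X) \<le> n" unfolding n_def using fin XV by (intro card_mono) auto
  then have "\<delta> * n * card (S \<inter> X) \<le> \<delta> * n * n" using \<delta> by (intro mult_left_mono) auto
  moreover have "p * (\<delta> * n * n) \<le> \<delta> * n * n" using p \<delta> by (simp add: mult_left_le_one_le)
  moreover have "p * (p * e_between E X (V - X) - \<delta> * n * n) \<le> p * (\<Sum>x\<in>S \<inter> X. real (f x))"
    using level p by (intro mult_left_mono) auto
  ultimately show ?thesis using nbhd by (simp add: n_def power2_eq_square algebra_simps)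
qed

lemma card_sides_ge_half_if_sparse:
  fixes p q \<delta> :: real
  assumes G: "simple_graph V E" and fin: "finite V"
    and AV: "A \<subseteq> V" and BV: "B \<subseteq> V" and disj: "A \<inter> B = {}"
    and p: "0 < p" "p \<le> 1" and q: "0 < q" "q \<le> 1" and \<delta>: "\<delta> = p ^ 4 * q ^ 3 / 2048"
    and deg: "\<forall>w\<in>A \<union> B. p * q * card V / 2 \<le> card (nbhd E (A \<union> B) w)"
    and misplaced: "misplaced E A B X \<le> 2 * \<delta> * (card V)\<^sup>2"
    and large: "p * q * card V / 8 < card A" "p * q * card V / 8 < card B"
    and sparse: "e_between E A B \<le> p\<^sup>2 * q / 400 * card A * card B"
  shows "card A / 2 \<le> card (A \<inter> X)" "card B / 2 \<le> card (B - X)"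
proof -
  define n where "n = real (card V)"
  have fA: "finite A" and fB: "finite B" using AV BV fin finite_subset by auto
  have n: "0 < n" using large p q AV fin by (auto simp: n_def card_gt_0_iff intro: finite_subset)
  have an: "card A \<le> n" and bn: "card B \<le> n" using AV BV fin by (simp_all add: n_def card_mono)
  have c: "0 \<le> p\<^sup>2 * q / 400" using q by simp
  have "p\<^sup>2 * q / 400 * card A * card B \<le> p\<^sup>2 * q / 400 * card A * n"
    using c bn by (intro mult_left_mono) auto
  moreover have "p\<^sup>2 * q / 400 * card B * card A \<le> p\<^sup>2 * q / 400 * card B * n"
    using c an by (intro mult_left_mono) auto
  moreover have "e_between E A B = (\<Sum>w\<in>A. card (nbhd E B w))"
    using fA fB by (simp add: e_between_eq_sum_card_nbhd)
  moreover have "e_between E A B = (\<Sum>w\<in>B. card (nbhd E A w))"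
    using fA fB e_between_commute[OF G AV BV] by (simp add: e_between_eq_sum_card_nbhd)
  ultimately have sparse_A: "(\<Sum>w\<in>A. real (card (nbhd E B w))) \<le> p\<^sup>2 * q / 400 * card A * n"
    and sparse_B: "(\<Sum>w\<in>B. real (card (nbhd E A w))) \<le> p\<^sup>2 * q / 400 * card B * n"
    using sparse by (simp_all add: mult_ac flip: of_nat_sum)
  have "\<forall>w\<in>A \<union> B. p * q * n / 2 \<le> card (nbhd E A w) + card (nbhd E B w)"
    using deg card_nbhd_Un[OF fA fB disj] by (auto simp: n_def)
  then have deg_A: "\<forall>w\<in>A. p * q * n / 2 \<le> card (nbhd E A w) + card (nbhd E B w)"
    and deg_B: "\<forall>w\<in>B. p * q * n / 2 \<le> card (nbhd E B w) + card (nbhd E A w)"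
    by (simp_all add: add.commute)
  have "(\<Sum>w\<in>heavy E A B - X. real (card (nbhd E A w))) \<le> 2 * \<delta> * n\<^sup>2"
    "(\<Sum>w\<in>heavy E B A - - X. real (card (nbhd E B w))) \<le> 2 * \<delta> * n\<^sup>2"
    using misplaced sum_nonneg[of "heavy E A B - X" "\<lambda>w. real (card (nbhd E A w))"]
      sum_nonneg[of "heavy E B A \<inter> X" "\<lambda>w. real (card (nbhd E B w))"]
    by (simp_all add: misplaced_def n_def Diff_Compl)
  then show "card A / 2 \<le> card (A \<inter> X)" "card B / 2 \<le> card (B - X)"
    using card_Int_ge_half[OF fA p q \<delta> n deg_A sparse_A] card_Int_ge_half[OF fB p q \<delta> n deg_B sparse_B]
      large by (simp_all add: n_def Diff_eq)
qed

lemma e_between_ge_large_parts_of_cut_tests: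
  fixes p q \<delta> :: real
  assumes G: "simple_graph V E" and cd: "cut_dense V E q" and fin: "finite V"
    and AV: "A \<subseteq> V" and BV: "B \<subseteq> V" and disj: "A \<inter> B = {}" and XV: "X \<subseteq> V"
    and p: "0 < p" "p \<le> 1" and q: "0 < q" "q \<le> 1" and \<delta>: "\<delta> = p ^ 4 * q ^ 3 / 2048"
    and rep: "representative V p \<delta> (cut_test_sets V E X) (A \<union> B)"
    and deg: "\<forall>w\<in>A \<union> B. p * q * card V / 2 \<le> card (nbhd E (A \<union> B) w)"
    and misplaced: "misplaced E A B X \<le> 2 * \<delta> * (card V)\<^sup>2"
    and large: "p * q * card V / 8 < card A" "p * q * card V / 8 < card B"
  shows "p\<^sup>2 * q / 400 * card A * card B \<le> e_between E A B"
proof (rule ccontr)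
  define n where "n = real (card V)"
  define a where "a = real (card A)"
  define b where "b = real (card B)"
  define e where "e = real (e_between E A B)"
  assume "\<not> ?thesis"
  then have sparse: "e < p\<^sup>2 * q / 400 * a * b" by (simp add: e_def a_def b_def)
  have pqn: "0 \<le> p * q * n" using p q by (simp add: n_def)
  then have a: "0 < a" and b: "0 < b" using large by (simp_all add: a_def b_def n_def)
  have "a / 2 \<le> card (A \<inter> X)" "b / 2 \<le> card (B - X)"
    using card_sides_ge_half_if_sparse[OF G fin AV BV disj p q \<delta> deg misplaced large] sparse
    by (simp_all add: a_def b_def e_def)
  moreover have "card (A \<inter> X) \<le> card X" "card (B - X) \<le> card (V - X)"
    using fin XV BV by (auto intro!: card_mono intro: finite_subset)
  ultimately have "a / 2 * (b / 2) \<le> real (card X) * card (V - X)"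
    using a b by (intro mult_mono) auto
  then have "p\<^sup>2 * q * (a * b) / 4 \<le> p\<^sup>2 * (q * card X * card (V - X))"
    using p q by (simp add: mult.assoc mult_left_mono)
  also have "\<dots> \<le> p\<^sup>2 * e_between E X (V - X)"
  proof (rule mult_left_mono)
    show "q * card X * card (V - X) \<le> e_between E X (V - X)"
      using cd XV unfolding cut_dense_def by (metis Diff_disjoint Un_Diff_cancel sup.absorb_iff2)
  qed simp
  also have "\<dots> \<le> e_between E ((A \<union> B) \<inter> X) ((A \<union> B) - X) + 2 * \<delta> * n\<^sup>2"
    using e_between_ge_if_representative[OF fin XV _ _ _ _ rep] AV BV p q by (simp add: n_def \<delta>)
  also have "\<dots> \<le> 6 * e + 4 * \<delta> * n\<^sup>2"
    using e_between_cut_le[OF G AV BV fin disj, of X] misplaced by (simp add: e_def n_def)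
  finally have "p\<^sup>2 * q * (a * b) / 4 \<le> 6 * e + 4 * \<delta> * n\<^sup>2" .
  moreover have "4 * \<delta> * n\<^sup>2 < p\<^sup>2 * q * (a * b) / 8"
  proof -
    have "p * q * n < 8 * a" "p * q * n < 8 * b"
      using large by (simp_all add: a_def b_def n_def)
    from mult_strict_mono[OF this] have "(p * q * n) * (p * q * n) < (8 * a) * (8 * b)"
      using pqn a by simp
    then have "p\<^sup>2 * q * ((p * q * n) * (p * q * n)) < p\<^sup>2 * q * ((8 * a) * (8 * b))"
      using p q by (intro mult_strict_left_mono) auto
    then show ?thesis by (simp add: \<delta> power2_eq_square eval_nat_numeral mult_ac)
  qed
  moreover have "0 < p\<^sup>2 * q * (a * b)" using p q a b by simp
  ultimately show False using sparse by (simp add: mult_ac)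
qed

section \<open>Majority votes of samples\<close>

definition vote :: "('a \<Rightarrow> 'a \<Rightarrow> bool) \<Rightarrow> 'a set \<Rightarrow> 'a \<Rightarrow> 'a \<Rightarrow> real" where
  "vote E A w v = (if E w v then if v \<in> A then 1 else -1 else 0)"

lemma vote_swap: "A \<inter> B = {} \<Longrightarrow> v \<in> A \<union> B \<Longrightarrow> vote E B w v = - vote E A w v"
  by (auto simp: vote_def)

lemma sum_vote:
  assumes "finite A" "finite B" "A \<inter> B = {}"
  shows "(\<Sum>v\<in>A \<union> B. vote E A w v) = real (card (nbhd E A w)) - card (nbhd E B w)"
    and "(\<Sum>v\<in>A \<union> B. (vote E A w v)\<^sup>2) = real (card (nbhd E A w)) + card (nbhd E B w)"
proof -
  have "(\<Sum>v\<in>A. vote E A w v) = (\<Sum>v\<in>A. if E w v then 1 else 0)"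
    by (intro sum.cong) (auto simp: vote_def)
  moreover have "(\<Sum>v\<in>B. vote E A w v) = - (\<Sum>v\<in>B. if E w v then 1 else 0)"
    unfolding sum_negf[symmetric] using assms(3) by (intro sum.cong) (auto simp: vote_def)
  ultimately show "(\<Sum>v\<in>A \<union> B. vote E A w v) = real (card (nbhd E A w)) - card (nbhd E B w)"
    using assms by (simp add: sum.union_disjoint sum.If_cases nbhd_def Int_def)
  have "(\<Sum>v\<in>A \<union> B. (vote E A w v)\<^sup>2) = (\<Sum>v\<in>A \<union> B. if E w v then 1 else 0)"
    by (intro sum.cong) (auto simp: vote_def)
  also have "\<dots> = card (nbhd E (A \<union> B) w)"
    using assms by (simp add: sum.If_cases nbhd_def Int_def)
  finally show "(\<Sum>v\<in>A \<union> B. (vote E A w v)\<^sup>2) = real (card (nbhd E A w)) + card (nbhd E B w)"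
    using assms by (simp add: card_nbhd_Un)
qed

lemma card_tuples_outvoted:
  assumes fin: "finite A" "finite B" and disj: "A \<inter> B = {}"
    and majority: "2 * card (nbhd E B w) < card (nbhd E A w)"
  shows "card (nbhd E A w) * card {xs\<in>tuples k (A \<union> B). (\<Sum>v\<leftarrow>xs. vote E A w v) \<le> 0} * k
    \<le> 6 * real (card (A \<union> B)) ^ (k + 1)"
proof -
  define a where "a = real (card (nbhd E A w))"
  define b where "b = real (card (nbhd E B w))"
  define N where "N = real (card {xs\<in>tuples k (A \<union> B). (\<Sum>v\<leftarrow>xs. vote E A w v) \<le> 0})"
  define s where "s = real (card (A \<union> B))"
  have ab: "2 * b < a" "0 \<le> b" using majority by (simp_all add: a_def b_def)
  have "N * k * (a - b)\<^sup>2 \<le> s ^ (k + 1) * (a + b)"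
    using card_tuples_sum_list_nonpos[of "A \<union> B" "vote E A w" k] fin disj ab
    by (simp add: sum_vote a_def b_def N_def s_def)
  then have "a * (N * k * (a - b)\<^sup>2) \<le> s ^ (k + 1) * (a * (a + b))"
    using ab by (simp add: mult_left_mono mult.left_commute)
  also have "\<dots> \<le> s ^ (k + 1) * (6 * (a - b)\<^sup>2)"
  proof (intro mult_left_mono)
    have "0 \<le> (5 * a - 3 * b) * (a - 2 * b)" using ab by (intro mult_nonneg_nonneg) auto
    then show "a * (a + b) \<le> 6 * (a - b)\<^sup>2" by (simp add: power2_eq_square algebra_simps)
  qed (simp add: s_def)
  finally have "(a * N * k) * (a - b)\<^sup>2 \<le> (6 * s ^ (k + 1)) * (a - b)\<^sup>2"
    by (simp add: mult_ac)
  then show ?thesis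
    using ab by (simp add: a_def N_def s_def)
qed

definition outvoted_weight :: "('a \<Rightarrow> 'a \<Rightarrow> bool) \<Rightarrow> 'a set \<Rightarrow> 'a set \<Rightarrow> 'a list \<Rightarrow> real" where
  "outvoted_weight E A B xs =
     (\<Sum>w\<in>heavy E A B. if (\<Sum>v\<leftarrow>xs. vote E A w v) \<le> 0 then real (card (nbhd E A w)) else 0)
   + (\<Sum>w\<in>heavy E B A. if (\<Sum>v\<leftarrow>xs. vote E B w v) \<le> 0 then real (card (nbhd E B w)) else 0)"

lemma exists_tuple_few_outvoted:
  assumes fin: "finite A" "finite B" and disj: "A \<inter> B = {}" and ne: "A \<union> B \<noteq> {}" and k: "0 < k"
  shows "\<exists>xs\<in>tuples k (A \<union> B). outvoted_weight E A B xs \<le> 6 * real (card (A \<union> B)) ^ 2 / k"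
proof -
  define L where "L = tuples k (A \<union> B)"
  define s where "s = real (card (A \<union> B))"
  define outvoted where "outvoted C w = {xs\<in>L. (\<Sum>v\<leftarrow>xs. vote E C w v) \<le> 0}" for C w
  have finL: "finite L" and cardL: "card L = card (A \<union> B) ^ k"
    using fin by (simp_all add: L_def finite_lists_length_eq card_lists_length_eq)
  have s: "0 < s" using fin ne by (simp add: s_def card_gt_0_iff)
  have bound: "card (nbhd E C w) * card (outvoted C w) \<le> 6 * s ^ (k + 1) / k"
    if "C \<union> D = A \<union> B" "C \<inter> D = {}" "w \<in> heavy E C D" for C D w
  proof -
    have "finite C" "finite D" using fin that(1) by (metis finite_Un)+
    from card_tuples_outvoted[OF this that(2), of E w k] show ?thesis
      using that k by (simp add: heavy_def outvoted_def L_def s_def field_simps)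
  qed
  have "(\<Sum>xs\<in>L. outvoted_weight E A B xs)
      = (\<Sum>w\<in>heavy E A B. real (card (nbhd E A w) * card (outvoted A w)))
      + (\<Sum>w\<in>heavy E B A. real (card (nbhd E B w) * card (outvoted B w)))"
    unfolding outvoted_weight_def sum.distrib
    by (subst (1 2) sum.swap) (simp add: finL sum.If_cases Int_def outvoted_def mult.commute)
  also have "\<dots> \<le> card (heavy E A B) * (6 * s ^ (k + 1) / k) + card (heavy E B A) * (6 * s ^ (k + 1) / k)"
    using bound[of A B] bound[of B A] disj
    by (intro add_mono sum_bounded_above) (auto simp: Int_commute Un_commute)
  also have "\<dots> \<le> s * (6 * s ^ (k + 1) / k)"
  proof -
    have "card (heavy E A B) + card (heavy E B A) = card (heavy E A B \<union> heavy E B A)"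
      using fin disj by (intro card_Un_disjoint[symmetric]) (auto simp: heavy_def)
    also have "\<dots> \<le> card (A \<union> B)"
      using fin by (intro card_mono) (auto simp: heavy_def)
    finally have "real (card (heavy E A B)) + card (heavy E B A) \<le> s"
      by (simp add: s_def)
    then have "(real (card (heavy E A B)) + card (heavy E B A)) * (6 * s ^ (k + 1) / k)
        \<le> s * (6 * s ^ (k + 1) / k)"
      using s by (intro mult_right_mono) auto
    then show ?thesis by (simp add: distrib_right add_divide_distrib)
  qed
  also have "\<dots> = card L * (6 * s\<^sup>2 / k)"
    by (simp add: cardL s_def power2_eq_square field_simps)
  finally have "(\<Sum>xs\<in>L. outvoted_weight E A B xs) \<le> card L * (6 * s\<^sup>2 / k)" .
  moreover have "L \<noteq> {}" using cardL s by (auto simp: s_def)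
  ultimately have "\<exists>xs\<in>L. outvoted_weight E A B xs \<le> 6 * s\<^sup>2 / k"
    using sum_strict_mono[OF finL, of "\<lambda>_. 6 * s\<^sup>2 / k" "outvoted_weight E A B"] by (force simp: not_le)
  then show ?thesis by (simp add: L_def s_def)
qed

definition vote_set :: "'a set \<Rightarrow> ('a \<Rightarrow> 'a \<Rightarrow> bool) \<Rightarrow> 'a set \<Rightarrow> 'a list \<Rightarrow> 'a set" where
  "vote_set V E A xs = {w\<in>V. 0 \<le> (\<Sum>v\<leftarrow>xs. vote E A w v)}"

lemma vote_set_Int_set: "vote_set V E (A \<inter> set xs) xs = vote_set V E A xs"
proof -
  have eq: "map (vote E (A \<inter> set xs) w) xs = map (vote E A w) xs" for w
    by (auto simp: vote_def)
  show ?thesis unfolding vote_set_def eq ..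
qed

lemma misplaced_vote_set_le:
  assumes fin: "finite V" and AB: "A \<union> B \<subseteq> V" and disj: "A \<inter> B = {}" and xs: "set xs \<subseteq> A \<union> B"
  shows "misplaced E A B (vote_set V E A xs) \<le> outvoted_weight E A B xs"
proof -
  have fin_heavy: "finite (heavy E A B)" "finite (heavy E B A)"
    using fin AB by (auto simp: heavy_def intro: finite_subset)
  have "(\<Sum>v\<leftarrow>xs. vote E B w v) = - (\<Sum>v\<leftarrow>xs. vote E A w v)" for w
    using xs disj by (induction xs) (auto simp: vote_swap)
  then have "heavy E A B - vote_set V E A xs \<subseteq> {w\<in>heavy E A B. (\<Sum>v\<leftarrow>xs. vote E A w v) \<le> 0}"
    and "heavy E B A \<inter> vote_set V E A xs \<subseteq> {w\<in>heavy E B A. (\<Sum>v\<leftarrow>xs. vote E B w v) \<le> 0}"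
    using AB by (auto simp: heavy_def vote_set_def)
  then show ?thesis
    using fin_heavy unfolding misplaced_def outvoted_weight_def
    by (intro add_mono) (auto simp: sum.If_cases Int_def intro!: sum_mono2)
qed

section \<open>Cut density of representative subsets\<close>

text \<open>The vote of a sample \<open>xs\<close> depends on the partition only through \<open>A \<inter> set xs\<close>, so this
  family covers the vote sets of all partitions while having size polynomial in \<open>card V\<close>.\<close>

definition test_family :: "'a set \<Rightarrow> ('a \<Rightarrow> 'a \<Rightarrow> bool) \<Rightarrow> nat \<Rightarrow> 'a set set" where
  "test_family V E k = nbhd E V ` V
     \<union> (\<Union>xs\<in>tuples k V. \<Union>A\<in>Pow (set xs). cut_test_sets V E (vote_set V E A xs))"

lemma test_family_subset: "T \<in> test_family V E k \<Longrightarrow> T \<subseteq> V"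
  by (auto simp: test_family_def cut_test_sets_def nbhd_def vote_set_def)

lemma card_cut_test_sets:
  assumes "finite V"
  shows "card (cut_test_sets V E X) \<le> 2 * card V"
proof -
  have "card (nbhd E (V - X) ` V) \<le> card V" using assms by (rule card_image_le)
  moreover have "card ((\<lambda>j. {x\<in>X. j \<le> card (nbhd E (V - X) x)}) ` {1..card V}) \<le> card V"
    using card_image_le[of "{1..card V}"] by fastforce
  ultimately show ?thesis
    unfolding cut_test_sets_def using card_Un_le by (smt (verit) add_mono mult_2 order_trans)
qed

lemma
  assumes "finite V"
  shows finite_test_family: "finite (test_family V E k)"
    and card_test_family: "card (test_family V E k) \<le> card V + (2 * card V) ^ (k + 1)"
proof -
  define L where "L = tuples k V"
  define F where "F xs = (\<Union>A\<in>Pow (set xs). cut_test_sets V E (vote_set V E A xs))" for xs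
  have finL: "finite L" and cardL: "card L = card V ^ k"
    using assms by (simp_all add: L_def finite_lists_length_eq card_lists_length_eq)
  have finF: "finite (F xs)" for xs
    using assms by (simp add: F_def cut_test_sets_def)
  have cardF: "card (F xs) \<le> 2 ^ k * (2 * card V)" if "xs \<in> L" for xs
  proof -
    have "card (F xs) \<le> (\<Sum>A\<in>Pow (set xs). card (cut_test_sets V E (vote_set V E A xs)))"
      unfolding F_def by (rule card_UN_le) simp
    also have "\<dots> \<le> card (Pow (set xs)) * (2 * card V)"
      using sum_bounded_above[of "Pow (set xs)"] card_cut_test_sets[OF assms] by (metis of_nat_id)
    also have "card (Pow (set xs)) \<le> 2 ^ k"
      using that card_length[of xs] by (simp add: L_def card_Pow)
    finally show ?thesis by (simp add: mult_right_mono)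
  qed
  have family: "test_family V E k = nbhd E V ` V \<union> (\<Union>xs\<in>L. F xs)"
    by (simp add: test_family_def L_def F_def)
  show "finite (test_family V E k)" unfolding family using assms finL finF by blast
  have "card (test_family V E k) \<le> card (nbhd E V ` V) + card (\<Union>xs\<in>L. F xs)"
    unfolding family by (rule card_Un_le)
  also have "card (\<Union>xs\<in>L. F xs) \<le> (\<Sum>xs\<in>L. card (F xs))" by (rule card_UN_le[OF finL])
  also have "\<dots> \<le> card L * (2 ^ k * (2 * card V))"
    using sum_bounded_above[of L "\<lambda>xs. card (F xs)"] cardF by (metis of_nat_id)
  also have "card (nbhd E V ` V) \<le> card V" by (rule card_image_le[OF assms])
  finally show "card (test_family V E k) \<le> card V + (2 * card V) ^ (k + 1)"
    by (simp add: cardL power_mult_distrib mult_ac)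
qed

lemma exists_cut_test_few_misplaced:
  assumes fin: "finite V" and AV: "A \<subseteq> V" and BV: "B \<subseteq> V" and disj: "A \<inter> B = {}"
    and ne: "A \<union> B \<noteq> {}" and k: "0 < k"
  shows "\<exists>X\<subseteq>V. cut_test_sets V E X \<subseteq> test_family V E k
    \<and> misplaced E A B X \<le> 6 * real (card V) ^ 2 / k"
proof -
  have fA: "finite A" and fB: "finite B" using AV BV fin finite_subset by auto
  obtain xs where xs: "xs \<in> tuples k (A \<union> B)"
    and few: "outvoted_weight E A B xs \<le> 6 * real (card (A \<union> B)) ^ 2 / k"
    using exists_tuple_few_outvoted[OF fA fB disj ne k] by blast
  define X where "X = vote_set V E A xs"
  have "xs \<in> tuples k V" "A \<inter> set xs \<in> Pow (set xs)" using xs AV BV by auto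
  then have "cut_test_sets V E X \<subseteq> test_family V E k"
    unfolding test_family_def X_def vote_set_Int_set[symmetric, of V E A xs] by blast
  moreover have "X \<subseteq> V" by (auto simp: X_def vote_set_def)
  moreover have "misplaced E A B X \<le> 6 * real (card V) ^ 2 / k"
  proof -
    have "misplaced E A B X \<le> outvoted_weight E A B xs"
      using misplaced_vote_set_le[OF fin _ disj, of xs E] xs AV BV unfolding X_def by auto
    also note few
    also have "6 * real (card (A \<union> B)) ^ 2 / k \<le> 6 * real (card V) ^ 2 / k"
      using card_mono[OF fin, of "A \<union> B"] AV BV by (intro divide_right_mono mult_left_mono power_mono) auto
    finally show ?thesis .
  qed
  ultimately show ?thesis by blast
qed

lemma e_between_ge_large_parts:
  fixes p q \<delta> :: real
  assumes G: "simple_graph V E" and cd: "cut_dense V E q" and fin: "finite V"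
    and AV: "A \<subseteq> V" and BV: "B \<subseteq> V" and disj: "A \<inter> B = {}"
    and p: "0 < p" "p \<le> 1" and q: "0 < q" "q \<le> 1"
    and \<delta>: "\<delta> = p ^ 4 * q ^ 3 / 2048" and k: "3 \<le> \<delta> * k"
    and rep: "representative V p \<delta> (test_family V E k) (A \<union> B)"
    and deg: "\<forall>w\<in>A \<union> B. p * q * card V / 2 \<le> card (nbhd E (A \<union> B) w)"
    and large: "p * q * card V / 8 < card A" "p * q * card V / 8 < card B"
  shows "p\<^sup>2 * q / 400 * card A * card B \<le> e_between E A B"
proof -
  define n where "n = real (card V)"
  have k0: "0 < k" using k by (cases k) auto
  have "0 \<le> p * q * card V" using p q by simp
  then have "A \<noteq> {}" using large by auto
  then obtain X where XV: "X \<subseteq> V" and tests: "cut_test_sets V E X \<subseteq> test_family V E k"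
    and few: "misplaced E A B X \<le> 6 * n\<^sup>2 / k"
    using exists_cut_test_few_misplaced[OF fin AV BV disj _ k0] unfolding n_def by blast
  have "3 * n\<^sup>2 \<le> (\<delta> * k) * n\<^sup>2" using k by (intro mult_right_mono) auto
  then have "6 * n\<^sup>2 / k \<le> 2 * \<delta> * n\<^sup>2" using k0 by (simp add: field_simps)
  then have misplaced: "misplaced E A B X \<le> 2 * \<delta> * (card V)\<^sup>2"
    using few by (simp add: n_def)
  have "representative V p \<delta> (cut_test_sets V E X) (A \<union> B)"
    using rep tests unfolding representative_def by blast
  from e_between_ge_large_parts_of_cut_tests[OF G cd fin AV BV disj XV p q \<delta> this deg misplaced large]
  show ?thesis .
qed

lemma card_nbhd_ge_if_representative:
  fixes p q \<delta> :: real
  assumes cd: "cut_dense V E q" and fin: "finite V" and n: "4 \<le> card V" and SV: "S \<subseteq> V"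
    and p: "0 \<le> p" and q: "0 \<le> q" and \<delta>: "\<delta> \<le> p * q / 8"
    and rep: "representative V p \<delta> F S" and nbhd: "nbhd E V ` V \<subseteq> F" and w: "w \<in> V"
  shows "p * q * card V / 2 \<le> card (nbhd E S w)"
proof -
  have "p * (q * (card V - 1)) \<le> p * card (nbhd E V w)"
    using card_nbhd_ge_if_cut_dense[OF cd fin w] p by (intro mult_left_mono) auto
  then have "p * q * card V - p * q \<le> p * card (nbhd E V w)"
    using n by (simp add: of_nat_diff algebra_simps)
  moreover have "p * card (nbhd E V w) - \<delta> * card V \<le> card (nbhd E S w)"
  proof -
    have "p * card (nbhd E V w) - \<delta> * card V \<le> card (S \<inter> nbhd E V w)"
      using rep nbhd w unfolding representative_def by blast
    moreover have "S \<inter> nbhd E V w = nbhd E S w" using SV by (auto simp: nbhd_def)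
    ultimately show ?thesis by simp
  qed
  moreover have "\<delta> * card V \<le> p * q * card V / 8" using mult_right_mono[OF \<delta>, of "card V"] by simp
  moreover have "p * q * 4 \<le> p * q * card V" using n p q by (intro mult_left_mono) auto
  ultimately show ?thesis by linarith
qed

lemma cut_dense_if_representative:
  fixes p q \<delta> :: real
  assumes G: "simple_graph V E" and cd: "cut_dense V E q" and fin: "finite V" and n4: "4 \<le> card V"
    and SV: "S \<subseteq> V" and p: "0 < p" "p \<le> 1" and q: "0 < q" "q \<le> 1"
    and \<delta>: "\<delta> = p ^ 4 * q ^ 3 / 2048" and k: "3 \<le> \<delta> * k"
    and rep: "representative V p \<delta> (test_family V E k) S"
  shows "cut_dense S E (p\<^sup>2 * q / 400)"
  unfolding cut_dense_def
proof (intro allI impI, elim conjE)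
  fix A B assume SAB: "A \<union> B = S" and disj: "A \<inter> B = {}"
  define n where "n = real (card V)"
  have AV: "A \<subseteq> V" and BV: "B \<subseteq> V" and fA: "finite A" and fB: "finite B"
    using SAB SV fin finite_subset by auto
  have n: "4 \<le> n" using n4 by (simp add: n_def)
  have pqn: "0 \<le> p * q * n" using p q n by simp
  have "p ^ 3 * q\<^sup>2 \<le> 1" using p q by (simp add: mult_le_one power_le_one)
  then have "(p * q) * (p ^ 3 * q\<^sup>2) \<le> p * q" using p q by (simp add: mult_left_le)
  then have "p ^ 4 * q ^ 3 \<le> p * q" by (simp add: eval_nat_numeral mult_ac)
  then have \<delta>_le: "\<delta> \<le> p * q / 8" using p q mult_pos_pos[of p q] unfolding \<delta> by linarith
  have deg: "\<forall>w\<in>V. p * q * n / 2 \<le> card (nbhd E S w)"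
    using card_nbhd_ge_if_representative[OF cd fin n4 SV _ _ \<delta>_le rep] p q
    by (auto simp: n_def test_family_def)
  have c: "p\<^sup>2 * q / 400 * card C \<le> p * q * n / 400" if "C \<subseteq> V" for C
  proof -
    have "p\<^sup>2 * q * card C \<le> p\<^sup>2 * q * n"
      using card_mono[OF fin that] p q by (intro mult_left_mono) (auto simp: n_def)
    also have "\<dots> \<le> p * q * n"
      using p q n by (simp add: power2_eq_square mult_left_le_one_le mult_right_mono)
    finally show ?thesis by simp
  qed
  consider "card A \<le> p * q * n / 8" | "card B \<le> p * q * n / 8"
    | "p * q * n / 8 < card A" "p * q * n / 8 < card B" by linarith
  then show "p\<^sup>2 * q / 400 * card A * card B \<le> e_between E A B"
  proof cases
    case 1
    have "p\<^sup>2 * q / 400 * card B \<le> p * q * n / 2 - card A"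
      using 1 c[OF BV] pqn by linarith
    then show ?thesis
      using deg AV SAB by (intro e_between_ge_small_part[OF fA fB disj, where D = "p * q * n / 2"]) auto
  next
    case 2
    have "p\<^sup>2 * q / 400 * card A \<le> p * q * n / 2 - card B"
      using 2 c[OF AV] pqn by linarith
    then have "p\<^sup>2 * q / 400 * card B * card A \<le> e_between E B A"
      using deg BV SAB disj
      by (intro e_between_ge_small_part[OF fB fA, where D = "p * q * n / 2"]) (auto simp: Un_commute)
    then show ?thesis using e_between_commute[OF G AV BV] by (simp add: mult_ac)
  next
    case 3
    then show ?thesis
      using deg rep SAB AV BV
      by (intro e_between_ge_large_parts[OF G cd fin AV BV disj p q \<delta> k]) (auto simp: n_def)
  qed
qed

lemma random_subset_cut_dense:
  fixes p q \<delta> :: real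
  assumes G: "simple_graph V E" and cd: "cut_dense V E q" and fin: "finite V" and n4: "4 \<le> card V"
    and p: "0 < p" "p \<le> 1" and q: "0 < q" "q \<le> 1"
    and \<delta>: "\<delta> = p ^ 4 * q ^ 3 / 2048" and k: "3 \<le> \<delta> * k"
  shows "1 - 2 ^ (k + 2) * real (card V) ^ (k + 1) * exp (- (\<delta>\<^sup>2 / 4) * card V)
    \<le> random_subset_prob V p (\<lambda>S. cut_dense S E (p\<^sup>2 * q / 400))"
proof -
  define n where "n = card V"
  define F where "F = test_family V E k"
  have "p ^ 3 * q ^ 3 \<le> 1" using p q by (simp add: mult_le_one power_le_one)
  then have "p * (p ^ 3 * q ^ 3) \<le> p" using p by (simp add: mult_left_le)
  then have \<delta>_pos: "0 < \<delta>" and \<delta>_le: "\<delta> \<le> p" using p q by (simp_all add: \<delta> eval_nat_numeral mult_ac)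
  have "n \<le> n ^ (k + 1)" using n4 by (simp add: n_def self_le_power)
  also have "\<dots> \<le> 2 ^ (k + 1) * n ^ (k + 1)" by simp
  finally have "n + 2 ^ (k + 1) * n ^ (k + 1) \<le> 2 ^ (k + 2) * n ^ (k + 1)" by simp
  moreover have "card F \<le> n + 2 ^ (k + 1) * n ^ (k + 1)"
    using card_test_family[OF fin, of E k] by (simp add: F_def n_def power_mult_distrib mult_ac)
  ultimately have "card F \<le> 2 ^ (k + 2) * n ^ (k + 1)" by linarith
  then have "real (card F) \<le> real (2 ^ (k + 2) * n ^ (k + 1))" by (simp only: of_nat_le_iff)
  then have "card F * exp (- (\<delta>\<^sup>2 / 4) * n) \<le> 2 ^ (k + 2) * real n ^ (k + 1) * exp (- (\<delta>\<^sup>2 / 4) * n)"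
    by (intro mult_right_mono) auto
  then have "1 - 2 ^ (k + 2) * real n ^ (k + 1) * exp (- (\<delta>\<^sup>2 / 4) * n)
      \<le> 1 - card F * exp (- (\<delta>\<^sup>2 / 4) * n)"
    by simp
  also have "\<dots> \<le> random_subset_prob V p (representative V p \<delta> F)"
    using random_subset_prob_representative[OF fin _ _ \<delta>_pos \<delta>_le p(2)] fin
    by (simp add: F_def n_def finite_test_family test_family_subset)
  also have "\<dots> \<le> random_subset_prob V p (\<lambda>S. cut_dense S E (p\<^sup>2 * q / 400))"
    using p cut_dense_if_representative[OF G cd fin n4 _ p q \<delta> k]
    by (intro random_subset_prob_mono) (auto simp: F_def)
  finally show ?thesis by (simp add: n_def)
qed

lemma eventually_poly_exp_le:
  fixes \<kappa> \<epsilon> C :: real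
  assumes \<kappa>: "0 < \<kappa>" and \<epsilon>: "0 < \<epsilon>"
  shows "\<exists>N. \<forall>n\<ge>N. C * real n ^ m * exp (- \<kappa> * n) \<le> \<epsilon>"
proof -
  have "filterlim (\<lambda>n::nat. \<kappa> * real n) at_top sequentially"
    by (rule filterlim_tendsto_pos_mult_at_top[OF tendsto_const \<kappa> filterlim_real_sequentially])
  from filterlim_compose[OF tendsto_power_div_exp_0 this]
  have "(\<lambda>n::nat. C / \<kappa> ^ m * ((\<kappa> * real n) ^ m / exp (\<kappa> * real n))) \<longlonglongrightarrow> C / \<kappa> ^ m * 0"
    by (intro tendsto_mult tendsto_const)
  moreover have "C / \<kappa> ^ m * ((\<kappa> * real n) ^ m / exp (\<kappa> * real n)) = C * real n ^ m * exp (- \<kappa> * n)" for n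
    using \<kappa> by (simp add: power_mult_distrib exp_minus field_simps)
  ultimately have "(\<lambda>n. C * real n ^ m * exp (- \<kappa> * n)) \<longlonglongrightarrow> 0" by simp
  from order_tendstoD(2)[OF this \<epsilon>] show ?thesis
    by (auto simp: eventually_sequentially intro: less_imp_le)
qed

theorem lemma3p11:
  fixes p q :: real
  assumes "0 < p" "p \<le> 1" "0 < q" "q \<le> 1"
  shows "\<forall>\<epsilon>>0. \<exists>N. \<forall>n\<ge>N. \<forall>E :: nat \<Rightarrow> nat \<Rightarrow> bool.
           simple_graph {0..<n} E \<and> cut_dense {0..<n} E q \<longrightarrow>
           random_subset_prob {0..<n} p
             (\<lambda>S. cut_dense S E (p powr (20 / q ^ 3) * q ^ 3 / 400)) \<ge> 1 - \<epsilon>"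
proof (intro allI impI)
  fix \<epsilon> :: real assume \<epsilon>: "0 < \<epsilon>"
  define \<delta> where "\<delta> = p ^ 4 * q ^ 3 / 2048"
  define k where "k = nat \<lceil>3 / \<delta>\<rceil>"
  have \<delta>: "0 < \<delta>" using assms by (simp add: \<delta>_def)
  moreover have "3 / \<delta> \<le> k" by (simp add: k_def) linarith
  ultimately have k: "3 \<le> \<delta> * k" by (simp add: field_simps)
  have "q ^ 3 \<le> q" "2 \<le> 20 / q ^ 3"
    using assms power_decreasing[of 1 3 q] power_le_one[of q 3] by (simp_all add: field_simps)
  then have density: "p powr (20 / q ^ 3) * q ^ 3 / 400 \<le> p\<^sup>2 * q / 400"
    using assms powr_mono'[of 2 "20 / q ^ 3" p] by (intro divide_right_mono mult_mono) auto
  obtain N where N: "\<forall>n\<ge>N. 2 ^ (k + 2) * real n ^ (k + 1) * exp (- (\<delta>\<^sup>2 / 4) * n) \<le> \<epsilon>"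
    using eventually_poly_exp_le[of "\<delta>\<^sup>2 / 4" \<epsilon> "2 ^ (k + 2)" "k + 1"] \<delta> \<epsilon> by auto
  show "\<exists>N. \<forall>n\<ge>N. \<forall>E :: nat \<Rightarrow> nat \<Rightarrow> bool.
           simple_graph {0..<n} E \<and> cut_dense {0..<n} E q \<longrightarrow>
           random_subset_prob {0..<n} p
             (\<lambda>S. cut_dense S E (p powr (20 / q ^ 3) * q ^ 3 / 400)) \<ge> 1 - \<epsilon>"
  proof (intro exI allI impI, elim conjE)
    fix n :: nat and E assume n: "max N 4 \<le> n"
      and G: "simple_graph {0..<n} E" and cd: "cut_dense {0..<n} E q"
    have "1 - \<epsilon> \<le> 1 - 2 ^ (k + 2) * real n ^ (k + 1) * exp (- (\<delta>\<^sup>2 / 4) * n)"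
      using N n by simp
    also have "\<dots> \<le> random_subset_prob {0..<n} p (\<lambda>S. cut_dense S E (p\<^sup>2 * q / 400))"
      using random_subset_cut_dense[OF G cd _ _ assms \<delta>_def k] n by simp
    also have "\<dots> \<le> random_subset_prob {0..<n} p (\<lambda>S. cut_dense S E (p powr (20 / q ^ 3) * q ^ 3 / 400))"
      using assms by (intro random_subset_prob_mono) (auto intro: cut_dense_mono[OF _ density])
    finally show "1 - \<epsilon> \<le> random_subset_prob {0..<n} p
        (\<lambda>S. cut_dense S E (p powr (20 / q ^ 3) * q ^ 3 / 400))" .
  qed
qed

end
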